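(* Assume $\lambda^*/n\to0$, $\lambda^*\to\infty$, that $\lambda_j/\lambda^*\to\lambda^0_j\in[0,1]$ and $\sqrt{\lambda^*}/\lambda_j\to\psi_j$ for all $j$, and that $\psi\in\{0,\infty\}^p$. Then every closed proper subset $\mathcal{C}\subsetneq\mathcal{M}$ satisfies $$\lim_{n\to\infty}\inf_{\beta\in\mathbb{R}^p}P_\beta\Big(\beta\in\hat\beta_{AL}-\sqrt{\tfrac{\lambda^*}{n}}\,\mathcal{C}\Big)=0,$$ where $\mathcal{M}=\mathcal{M}(\lambda^0,\psi)$.
   Context: For each $n\ge p$: linear regression model $y=X\beta+\varepsilon$ with $y\in\mathbb{R}^n$, non-stochastic $X\in\mathbb{R}^{n\times p}$ ($p$ fixed) of full column rank, unknown $\beta\in\mathbb{R}^p$, and $\varepsilon$ with i.i.d. components of mean zero and finite variance $\sigma^2>0$; $P_\beta$ is the probability when the true parameter is $\beta$. $X'X/n\to C$ positive definite, and $\sqrt{n}(X'X)^{-1}X'\varepsilon\overset{d}{\longrightarrow}N(0,\sigma^2C^{-1})$. $\hat\beta_{LS}=(X'X)^{-1}X'y$; the events $\{\hat\beta_{LS,j}=0\}$ have probability zero and are excluded. Non-negative tuning parameters $\lambda_j=\lambda_{n,j}$ (each either positive for all large $n$ or zero for all large $n$), $\lambda^*=\max_j\lambda_j$, convention $\sqrt{\lambda^*}/0=\infty$. Adaptive Lasso: $\hat\beta_{AL}=\arg\min_{b\in\mathbb{R}^p}\big(\|y-Xb\|^2+2\sum_{j=1}^p\lambda_j|b_j|/|\hat\beta_{LS,j}|\big)$.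 For $\mu\in[0,\infty)^p$ and $\psi\in[0,\infty]^p$, $\mathcal{M}(\mu,\psi)=\{m\in\mathbb{R}^p:(Cm)_j=0\text{ if }\psi_j=\infty,\ m_j(Cm)_j\le\mu_j\text{ if }\psi_j<\infty\}$. For a set $S$ and scalar $c$, $\hat\beta_{AL}-cS=\{\hat\beta_{AL}-cs:s\in S\}$. *)

theory Defs
  imports "HOL-Probability.Probability"
begin

text \<open>Design: row i (i < n) of the n x p design matrix at sample size n is X n i.\<close>

definition gram :: "(nat \<Rightarrow> nat \<Rightarrow> real ^ 'p) \<Rightarrow> nat \<Rightarrow> real ^ 'p ^ 'p" where
  "gram X n = (\<chi> j k. \<Sum>i<n. X n i $ j * X n i $ k)"

definition full_col_rank :: "(nat \<Rightarrow> nat \<Rightarrow> real ^ 'p) \<Rightarrow> nat \<Rightarrow> bool" where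
  "full_col_rank X n \<longleftrightarrow> (\<forall>b. (\<forall>i<n. X n i \<bullet> b = 0) \<longrightarrow> b = 0)"

definition pos_def_mat :: "real ^ 'p ^ 'p \<Rightarrow> bool" where
  "pos_def_mat A \<longleftrightarrow> transpose A = A \<and> (\<forall>x. x \<noteq> 0 \<longrightarrow> x \<bullet> (A *v x) > 0)"

definition resp :: "(nat \<Rightarrow> nat \<Rightarrow> real ^ 'p) \<Rightarrow> (nat \<Rightarrow> 'a \<Rightarrow> real) \<Rightarrow> nat \<Rightarrow> real ^ 'p \<Rightarrow> 'a \<Rightarrow> nat \<Rightarrow> real" where
  "resp X eps n \<beta> \<omega> i = X n i \<bullet> \<beta> + eps i \<omega>"

definition beta_LS :: "(nat \<Rightarrow> nat \<Rightarrow> real ^ 'p) \<Rightarrow> (nat \<Rightarrow> 'a \<Rightarrow> real) \<Rightarrow> nat \<Rightarrow> real ^ 'p \<Rightarrow> 'a \<Rightarrow> real ^ 'p" where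
  "beta_LS X eps n \<beta> \<omega> = matrix_inv (gram X n) *v (\<Sum>i<n. resp X eps n \<beta> \<omega> i *\<^sub>R X n i)"

definition AL_obj :: "(nat \<Rightarrow> nat \<Rightarrow> real ^ 'p) \<Rightarrow> (nat \<Rightarrow> 'a \<Rightarrow> real) \<Rightarrow> (nat \<Rightarrow> 'p \<Rightarrow> real)
    \<Rightarrow> nat \<Rightarrow> real ^ 'p \<Rightarrow> 'a \<Rightarrow> real ^ 'p \<Rightarrow> real" where
  "AL_obj X eps lam n \<beta> \<omega> b =
     (\<Sum>i<n. (resp X eps n \<beta> \<omega> i - X n i \<bullet> b)\<^sup>2)
     + 2 * (\<Sum>j\<in>UNIV. lam n j * \<bar>b $ j\<bar> / \<bar>beta_LS X eps n \<beta> \<omega> $ j\<bar>)"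

text \<open>Adaptive Lasso estimator: a minimiser of the objective (unique under full column rank).\<close>
definition beta_AL :: "(nat \<Rightarrow> nat \<Rightarrow> real ^ 'p) \<Rightarrow> (nat \<Rightarrow> 'a \<Rightarrow> real) \<Rightarrow> (nat \<Rightarrow> 'p \<Rightarrow> real)
    \<Rightarrow> nat \<Rightarrow> real ^ 'p \<Rightarrow> 'a \<Rightarrow> real ^ 'p" where
  "beta_AL X eps lam n \<beta> \<omega> =
     (SOME b. \<forall>b'. AL_obj X eps lam n \<beta> \<omega> b \<le> AL_obj X eps lam n \<beta> \<omega> b')"

definition lamstar :: "(nat \<Rightarrow> 'p::finite \<Rightarrow> real) \<Rightarrow> nat \<Rightarrow> real" where
  "lamstar lam n = Max (range (lam n))"

text \<open>sqrt(lambda*)/lambda_j with the convention sqrt(lambda*)/0 = infinity.\<close>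
definition psi_ratio :: "(nat \<Rightarrow> 'p::finite \<Rightarrow> real) \<Rightarrow> nat \<Rightarrow> 'p \<Rightarrow> ereal" where
  "psi_ratio lam n j = (if lam n j = 0 then \<infinity> else ereal (sqrt (lamstar lam n) / lam n j))"

definition Mset :: "real ^ 'p ^ 'p \<Rightarrow> ('p \<Rightarrow> real) \<Rightarrow> ('p \<Rightarrow> ereal) \<Rightarrow> (real ^ 'p) set" where
  "Mset C \<mu> \<psi> = {m. \<forall>j. (\<psi> j = \<infinity> \<longrightarrow> (C *v m) $ j = 0) \<and>
                          (\<psi> j < \<infinity> \<longrightarrow> m $ j * (C *v m) $ j \<le> \<mu> j)}"

definition gauss_density :: "real ^ 'p ^ 'p \<Rightarrow> real ^ 'p \<Rightarrow> real" where
  "gauss_density \<Sigma> x = (2 * pi) powr (- real CARD('p) / 2) / sqrt (det \<Sigma>)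
      * exp (- (x \<bullet> (matrix_inv \<Sigma> *v x)) / 2)"

definition conv_distr_to_density ::
    "'a measure \<Rightarrow> (nat \<Rightarrow> 'a \<Rightarrow> real ^ 'p) \<Rightarrow> (real ^ 'p \<Rightarrow> real) \<Rightarrow> bool" where
  "conv_distr_to_density M Z f \<longleftrightarrow>
     (\<forall>g::real ^ 'p \<Rightarrow> real. continuous_on UNIV g \<longrightarrow> bounded (range g) \<longrightarrow>
        (\<lambda>n. \<integral>\<omega>. g (Z n \<omega>) \<partial>M) \<longlonglongrightarrow> (\<integral>x. f x * g x \<partial>lborel))"

end

theory Submission
  imports Defs
begin

text \<open>Pick m in Mset outside the closed set Cset and delta > 0 such that the delta-ball around m
  misses Cset. With c n = sqrt (lamstar / n), the event beta \<in> beta_AL - c n Cset says that the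
  rescaled error (beta_AL - beta) / c n lies in Cset. We construct parameters beta n = c n gamma n
  for which this rescaled error is within delta of m with probability tending to one.
  Coordinates with (C m)_j = 0 are shifted far away, where their penalty is negligible; for the
  others psi_j = 0, i.e. lam_j dominates sqrt lamstar, and the shift is chosen so that the
  subgradient of the penalty cancels (C m)_j. Then b0 = beta n + c n m nearly satisfies the
  optimality condition of the objective, which is strongly convex with curvature of order n, so
  the minimiser lies within o(c n) of b0 as long as the noise sqrt n (X'X)^-1 X' eps is bounded;
  by Chebyshev's inequality this happens with probability close to one.\<close>

section \<open>Second moments of i.i.d. errors\<close>

locale iid_errors = prob_space +
  fixes eps :: "nat \<Rightarrow> 'a \<Rightarrow> real" and \<sigma> :: real
  assumes eps_meas: "\<And>i. eps i \<in> borel_measurable M"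
    and eps_indep: "indep_vars (\<lambda>_. borel) eps UNIV"
    and eps_ident: "\<And>i. distr M borel (eps i) = distr M borel (eps 0)"
    and eps_int: "integrable M (eps 0)"
    and eps_mean: "(\<integral>\<omega>. eps 0 \<omega> \<partial>M) = 0"
    and eps_sq_int: "integrable M (\<lambda>\<omega>. (eps 0 \<omega>)\<^sup>2)"
    and eps_var: "(\<integral>\<omega>. (eps 0 \<omega>)\<^sup>2 \<partial>M) = \<sigma>\<^sup>2"
begin

lemma eps_transfer:
  fixes f :: "real \<Rightarrow> real"
  assumes f: "f \<in> borel_measurable borel"
  shows "integrable M (\<lambda>\<omega>. f (eps i \<omega>)) \<longleftrightarrow> integrable M (\<lambda>\<omega>. f (eps 0 \<omega>))"
    and "(\<integral>\<omega>. f (eps i \<omega>) \<partial>M) = (\<integral>\<omega>. f (eps 0 \<omega>) \<partial>M)"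
proof -
  have "integrable M (\<lambda>\<omega>. f (eps k \<omega>)) \<longleftrightarrow> integrable (distr M borel (eps k)) f" for k
    using f eps_meas by (simp add: integrable_distr_eq)
  then show "integrable M (\<lambda>\<omega>. f (eps i \<omega>)) \<longleftrightarrow> integrable M (\<lambda>\<omega>. f (eps 0 \<omega>))"
    by (simp add: eps_ident[of i])
  have "(\<integral>\<omega>. f (eps k \<omega>) \<partial>M) = integral\<^sup>L (distr M borel (eps k)) f" for k
    using f eps_meas by (simp add: integral_distr)
  then show "(\<integral>\<omega>. f (eps i \<omega>) \<partial>M) = (\<integral>\<omega>. f (eps 0 \<omega>) \<partial>M)"
    by (simp add: eps_ident[of i])
qed

lemma integrable_eps: "integrable M (eps i)"
  using eps_transfer(1)[of "\<lambda>x. x" i] eps_int by simp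

lemma integrable_eps_sq: "integrable M (\<lambda>\<omega>. (eps i \<omega>)\<^sup>2)"
  using eps_transfer(1)[of "\<lambda>x. x\<^sup>2" i] eps_sq_int by simp

lemma integral_eps: "(\<integral>\<omega>. eps i \<omega> \<partial>M) = 0"
  using eps_transfer(2)[of "\<lambda>x. x" i] eps_mean by simp

lemma integral_eps_sq: "(\<integral>\<omega>. (eps i \<omega>)\<^sup>2 \<partial>M) = \<sigma>\<^sup>2"
  using eps_transfer(2)[of "\<lambda>x. x\<^sup>2" i] eps_var by simp

lemma indep_var_eps:
  assumes "i \<noteq> k"
  shows "indep_var borel (eps i) borel (eps k)"
proof -
  have "indep_var (PiM {i} (\<lambda>_. borel)) (\<lambda>\<omega>. restrict (\<lambda>i. eps i \<omega>) {i})
                  (PiM {k} (\<lambda>_. borel)) (\<lambda>\<omega>. restrict (\<lambda>i. eps i \<omega>) {k})"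
    by (rule indep_var_restrict[OF eps_indep]) (use assms in auto)
  then have "indep_var borel ((\<lambda>f. f i) \<circ> (\<lambda>\<omega>. restrict (\<lambda>i. eps i \<omega>) {i}))
                       borel ((\<lambda>f. f k) \<circ> (\<lambda>\<omega>. restrict (\<lambda>i. eps i \<omega>) {k}))"
    by (rule indep_var_compose) auto
  then show ?thesis by (simp add: o_def)
qed

lemma integrable_eps_mult: "integrable M (\<lambda>\<omega>. eps i \<omega> * eps k \<omega>)"
proof (cases "i = k")
  case True
  then show ?thesis using integrable_eps_sq[of i] by (simp add: power2_eq_square)
next
  case False
  then show ?thesis
    using indep_var_integrable[OF indep_var_eps[OF False] integrable_eps integrable_eps] by simp
qed

lemma integral_eps_mult: "(\<integral>\<omega>. eps i \<omega> * eps k \<omega> \<partial>M) = (if i = k then \<sigma>\<^sup>2 else 0)"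
proof (cases "i = k")
  case True
  then show ?thesis using integral_eps_sq[of i] by (simp add: power2_eq_square)
next
  case False
  then show ?thesis
    using indep_var_lebesgue_integral[OF indep_var_eps[OF False] integrable_eps integrable_eps]
    by (simp add: integral_eps)
qed

lemma
  fixes a :: "nat \<Rightarrow> real"
  shows integrable_weighted_sum_sq: "integrable M (\<lambda>\<omega>. (\<Sum>i<n. a i * eps i \<omega>)\<^sup>2)"
    and integral_weighted_sum_sq: "(\<integral>\<omega>. (\<Sum>i<n. a i * eps i \<omega>)\<^sup>2 \<partial>M) = \<sigma>\<^sup>2 * (\<Sum>i<n. (a i)\<^sup>2)"
proof -
  have sq: "(\<Sum>i<n. a i * eps i \<omega>)\<^sup>2 = (\<Sum>i<n. \<Sum>k<n. (a i * a k) * (eps i \<omega> * eps k \<omega>))" for \<omega>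
    by (simp add: power2_eq_square sum_product mult_ac)
  show "integrable M (\<lambda>\<omega>. (\<Sum>i<n. a i * eps i \<omega>)\<^sup>2)"
    unfolding sq using integrable_eps_mult by simp
  have "(\<integral>\<omega>. (\<Sum>i<n. a i * eps i \<omega>)\<^sup>2 \<partial>M)
      = (\<Sum>i<n. \<Sum>k<n. (a i * a k) * (if i = k then \<sigma>\<^sup>2 else 0))"
    unfolding sq using integrable_eps_mult by (simp add: integral_eps_mult)
  also have "\<dots> = \<sigma>\<^sup>2 * (\<Sum>i<n. (a i)\<^sup>2)"
    by (simp add: sum_distrib_left power2_eq_square mult_ac if_distrib sum.If_cases)
  finally show "(\<integral>\<omega>. (\<Sum>i<n. a i * eps i \<omega>)\<^sup>2 \<partial>M) = \<sigma>\<^sup>2 * (\<Sum>i<n. (a i)\<^sup>2)" .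
qed

end

section \<open>Gram matrices\<close>

lemma gram_mult_vec: "gram X n *v b = (\<Sum>i<n. (X n i \<bullet> b) *\<^sub>R X n i)"
  unfolding gram_def
  by (simp add: vec_eq_iff matrix_vector_mult_def inner_vec_def sum_distrib_left sum_distrib_right
      sum.swap[of _ UNIV] mult_ac)

lemma gram_quadratic_form: "b \<bullet> (gram X n *v b) = (\<Sum>i<n. (X n i \<bullet> b)\<^sup>2)"
  by (simp add: gram_mult_vec inner_sum_right power2_eq_square inner_commute)

lemma norm_matrix_vector_le: "norm (A *v x) \<le> (\<Sum>i\<in>UNIV. \<Sum>j\<in>UNIV. \<bar>A $ i $ j\<bar>) * norm (x :: real^'n)"
proof -
  have "norm (A *v x) \<le> onorm ((*v) A) * norm x"
    by (rule onorm[OF matrix_vector_mul_bounded_linear])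
  also have "\<dots> \<le> (\<Sum>i\<in>UNIV. \<Sum>j\<in>UNIV. \<bar>A $ i $ j\<bar>) * norm x"
    by (intro mult_right_mono onorm_le_matrix_component_sum) simp
  finally show ?thesis .
qed

lemma tendsto_entrywise_abs_sum:
  fixes A :: "nat \<Rightarrow> real^'n^'m"
  assumes "A \<longlonglongrightarrow> B"
  shows "(\<lambda>n. \<Sum>i\<in>UNIV. \<Sum>j\<in>UNIV. \<bar>A n $ i $ j\<bar>) \<longlonglongrightarrow> (\<Sum>i\<in>UNIV. \<Sum>j\<in>UNIV. \<bar>B $ i $ j\<bar>)"
  by (intro tendsto_intros tendsto_vec_nth assms)

lemma norm_matrix_residual_le:
  fixes A C :: "real^'n^'n" and m z :: "real^'n" and w :: "'n \<Rightarrow> real"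
  shows "norm (A *v (m - z) + (\<chi> j. w j))
    \<le> (\<Sum>i\<in>UNIV. \<Sum>j\<in>UNIV. \<bar>(A - C) $ i $ j\<bar>) * norm m + (\<Sum>i\<in>UNIV. \<Sum>j\<in>UNIV. \<bar>A $ i $ j\<bar>) * norm z
      + (\<Sum>j\<in>UNIV. \<bar>(C *v m) $ j + w j\<bar>)"
proof -
  have "A *v (m - z) + (\<chi> j. w j) = (A - C) *v m - A *v z + (\<chi> j. (C *v m) $ j + w j)"
    by (simp add: vec_eq_iff matrix_vector_mult_diff_rdistrib matrix_vector_mult_diff_distrib)
  also have "norm \<dots> \<le> norm ((A - C) *v m) + norm (A *v z) + norm (\<chi> j. (C *v m) $ j + w j)"
    by (intro order_trans[OF norm_triangle_ineq] add_right_mono norm_triangle_ineq4)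
  finally show ?thesis
    using norm_matrix_vector_le[of "A - C" m] norm_matrix_vector_le[of A z]
      norm_le_l1_cart[of "\<chi> j. (C *v m) $ j + w j"]
    by simp
qed

lemma invertible_if_coercive:
  fixes A :: "real^'n^'n"
  assumes "\<And>x. \<kappa> * (norm x)\<^sup>2 \<le> x \<bullet> (A *v x)" "\<kappa> > 0"
  shows "invertible A"
proof -
  have "x = 0" if "A *v x = 0" for x
  proof -
    have "\<kappa> * (norm x)\<^sup>2 \<le> 0" using assms(1)[of x] that by simp
    then show "x = 0" using assms(2) by (simp add: mult_le_0_iff)
  qed
  then show ?thesis
    by (simp add: invertible_left_inverse matrix_left_invertible_ker)
qed

lemma
  fixes A :: "real^'n^'n"
  assumes "invertible A"
  shows matrix_inv_right: "A ** matrix_inv A = mat 1"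
    and matrix_inv_left: "matrix_inv A ** A = mat 1"
proof -
  have "\<exists>A'. A ** A' = mat 1 \<and> A' ** A = mat 1" using assms unfolding invertible_def by auto
  from someI_ex[OF this] show "A ** matrix_inv A = mat 1" "matrix_inv A ** A = mat 1"
    unfolding matrix_inv_def by auto
qed

lemma matrix_inv_quadratic_form_le:
  fixes A :: "real^'n^'n"
  assumes coercive: "\<And>x. \<kappa> * (norm x)\<^sup>2 \<le> x \<bullet> (A *v x)" and "\<kappa> > 0"
  shows "y \<bullet> (matrix_inv A *v y) \<le> (norm y)\<^sup>2 / \<kappa>"
proof -
  define x where "x = matrix_inv A *v y"
  have Ax: "A *v x = y"
    using matrix_inv_right[OF invertible_if_coercive[OF assms]]
    by (simp add: x_def matrix_vector_mul_assoc)
  have "\<kappa> * (norm x)\<^sup>2 \<le> norm y * norm x"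
    using coercive[of x] norm_cauchy_schwarz[of y x] Ax by (simp add: inner_commute)
  then have "\<kappa> * norm x \<le> norm y"
    by (cases "x = 0") (auto simp: power2_eq_square)
  then have "norm x \<le> norm y / \<kappa>" using \<open>\<kappa> > 0\<close> by (simp add: field_simps)
  have "y \<bullet> x \<le> norm y * norm x" by (rule norm_cauchy_schwarz)
  also have "\<dots> \<le> norm y * (norm y / \<kappa>)"
    using \<open>norm x \<le> norm y / \<kappa>\<close> by (intro mult_left_mono) auto
  finally show ?thesis unfolding x_def by (simp add: power2_eq_square)
qed

lemma pos_def_mat_coercive:
  fixes C :: "real^'n^'n"
  assumes "pos_def_mat C"
  shows "\<exists>c>0. \<forall>x. c * (norm x)\<^sup>2 \<le> x \<bullet> (C *v x)"
proof -
  have cont: "continuous_on (sphere 0 1) (\<lambda>x::real^'n. x \<bullet> (C *v x))"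
    by (intro continuous_intros continuous_on_id linear_continuous_on) auto
  obtain x0 where x0: "x0 \<in> sphere 0 1" "\<And>y. y \<in> sphere 0 1 \<Longrightarrow> x0 \<bullet> (C *v x0) \<le> y \<bullet> (C *v y)"
    using continuous_attains_inf[OF compact_sphere _ cont] by fastforce
  have pos: "x0 \<bullet> (C *v x0) > 0"
    using assms x0(1) unfolding pos_def_mat_def by (metis mem_sphere_0 norm_zero zero_neq_one)
  have "x0 \<bullet> (C *v x0) * (norm x)\<^sup>2 \<le> x \<bullet> (C *v x)" for x
  proof (cases "x = 0")
    case False
    define u where "u = (1 / norm x) *\<^sub>R x"
    have u: "u \<in> sphere 0 1" using False by (simp add: u_def)
    have "x = norm x *\<^sub>R u" using False by (simp add: u_def)
    then have "x \<bullet> (C *v x) = (norm x)\<^sup>2 * (u \<bullet> (C *v u))"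
      by (metis inner_scaleR_left inner_scaleR_right matrix_vector_mult_scaleR power2_eq_square mult.assoc)
    then show ?thesis
      using mult_right_mono[OF x0(2)[OF u] zero_le_power2[of "norm x"]] by (simp add: mult.commute)
  qed simp
  then show ?thesis using pos by blast
qed

lemma eventually_coercive:
  fixes A :: "nat \<Rightarrow> real^'n^'n"
  assumes "A \<longlonglongrightarrow> C" "pos_def_mat C"
  shows "\<exists>\<kappa>>0. \<forall>\<^sub>F n in sequentially. \<forall>d. \<kappa> * (norm d)\<^sup>2 \<le> d \<bullet> (A n *v d)"
proof -
  obtain c where c: "c > 0" "\<And>x. c * (norm x)\<^sup>2 \<le> x \<bullet> (C *v x)"
    using pos_def_mat_coercive[OF assms(2)] by blast
  have "(\<lambda>n. \<Sum>i\<in>UNIV. \<Sum>j\<in>UNIV. \<bar>(A n - C) $ i $ j\<bar>) \<longlonglongrightarrow> 0"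
    using tendsto_entrywise_abs_sum[OF tendsto_diff[OF assms(1) tendsto_const[of C]]] by simp
  then have "\<forall>\<^sub>F n in sequentially. (\<Sum>i\<in>UNIV. \<Sum>j\<in>UNIV. \<bar>(A n - C) $ i $ j\<bar>) < c / 2"
    using order_tendstoD(2)[of _ 0 sequentially "c / 2"] c(1) by simp
  then have "\<forall>\<^sub>F n in sequentially. \<forall>d. c / 2 * (norm d)\<^sup>2 \<le> d \<bullet> (A n *v d)"
  proof eventually_elim
    case (elim n)
    show ?case
    proof
      fix d :: "real^'n"
      have "\<bar>d \<bullet> ((A n - C) *v d)\<bar> \<le> norm d * norm ((A n - C) *v d)"
        by (rule Cauchy_Schwarz_ineq2)
      also have "\<dots> \<le> norm d * ((\<Sum>i\<in>UNIV. \<Sum>j\<in>UNIV. \<bar>(A n - C) $ i $ j\<bar>) * norm d)"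
        by (intro mult_left_mono norm_matrix_vector_le) auto
      also have "\<dots> \<le> norm d * (c / 2 * norm d)"
        using elim by (intro mult_left_mono mult_right_mono) auto
      finally have "\<bar>d \<bullet> ((A n - C) *v d)\<bar> \<le> c / 2 * (norm d)\<^sup>2"
        by (simp add: power2_eq_square mult_ac)
      moreover have "d \<bullet> (A n *v d) = d \<bullet> (C *v d) + d \<bullet> ((A n - C) *v d)"
        by (simp add: matrix_vector_mult_diff_rdistrib inner_diff_right)
      ultimately show "c / 2 * (norm d)\<^sup>2 \<le> d \<bullet> (A n *v d)"
        using c(2)[of d] by linarith
    qed
  qed
  then show ?thesis using c(1) by (intro exI[of _ "c / 2"]) auto
qed

lemma eventually_gram_coercive:
  assumes "(\<lambda>n. (1 / real n) *\<^sub>R gram X n) \<longlonglongrightarrow> C" "pos_def_mat C"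
  shows "\<exists>c>0. \<forall>\<^sub>F n in sequentially. \<forall>d. real n * c * (norm d)\<^sup>2 \<le> (\<Sum>i<n. (X n i \<bullet> d)\<^sup>2)"
proof -
  obtain c where "c > 0" and ev: "\<forall>\<^sub>F n in sequentially. \<forall>d. c * (norm d)\<^sup>2 \<le> d \<bullet> ((1 / real n) *\<^sub>R gram X n *v d)"
    using eventually_coercive[OF assms] by blast
  have "\<forall>\<^sub>F n in sequentially. \<forall>d. real n * c * (norm d)\<^sup>2 \<le> (\<Sum>i<n. (X n i \<bullet> d)\<^sup>2)"
    using ev eventually_ge_at_top[of 1]
  proof eventually_elim
    case (elim n)
    show ?case
    proof
      fix d :: "real^'a"
      have "(\<Sum>i<n. (X n i \<bullet> d)\<^sup>2) = real n * (d \<bullet> ((1 / real n) *\<^sub>R gram X n *v d))"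
        using elim by (simp add: gram_quadratic_form[symmetric] scaleR_matrix_vector_assoc[symmetric])
      then show "real n * c * (norm d)\<^sup>2 \<le> (\<Sum>i<n. (X n i \<bullet> d)\<^sup>2)"
        using elim by (simp add: mult.assoc)
    qed
  qed
  with \<open>c > 0\<close> show ?thesis by blast
qed

lemma beta_LS_eq:
  assumes "invertible (gram X n)"
  shows "beta_LS X eps n \<beta> \<omega> = \<beta> + matrix_inv (gram X n) *v (\<Sum>i<n. eps i \<omega> *\<^sub>R X n i)"
proof -
  have "(\<Sum>i<n. resp X eps n \<beta> \<omega> i *\<^sub>R X n i) = gram X n *v \<beta> + (\<Sum>i<n. eps i \<omega> *\<^sub>R X n i)"
    by (simp add: resp_def gram_mult_vec scaleR_add_left sum.distrib inner_commute)
  then show ?thesis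
    by (simp add: beta_LS_def matrix_vector_right_distrib matrix_vector_mul_assoc
        matrix_inv_left[OF assms])
qed

context iid_errors
begin

lemma noise_second_moment:
  fixes X :: "nat \<Rightarrow> nat \<Rightarrow> real^'p::finite"
  assumes coercive: "\<And>d. \<kappa> * (norm d)\<^sup>2 \<le> (\<Sum>i<n. (X n i \<bullet> d)\<^sup>2)" and "\<kappa> > 0"
  defines "u \<equiv> \<lambda>\<omega>. matrix_inv (gram X n) *v (\<Sum>i<n. eps i \<omega> *\<^sub>R X n i)"
  shows "integrable M (\<lambda>\<omega>. (norm (u \<omega>))\<^sup>2)"
    and "(\<integral>\<omega>. (norm (u \<omega>))\<^sup>2 \<partial>M) \<le> real CARD('p) * \<sigma>\<^sup>2 / \<kappa>"
proof -
  define G where "G = gram X n"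
  define A where "A = matrix_inv G"
  have coercive': "\<And>d. \<kappa> * (norm d)\<^sup>2 \<le> d \<bullet> (G *v d)"
    using coercive by (simp add: G_def gram_quadratic_form)
  have u_comp: "u \<omega> $ j = (\<Sum>i<n. (A *v X n i) $ j * eps i \<omega>)" for \<omega> j
    by (simp add: u_def A_def G_def vec.sum matrix_vector_mult_scaleR sum_component mult_ac)
  have norm_u: "(norm (u \<omega>))\<^sup>2 = (\<Sum>j\<in>UNIV. (u \<omega> $ j)\<^sup>2)" for \<omega>
    unfolding power2_norm_eq_inner inner_vec_def by (simp add: power2_eq_square)
  \<comment> \<open>the sum is (A G A^T)_jj = A_jj, which coercivity bounds by 1 / kappa\<close>
  have row_sum: "(\<Sum>i<n. ((A *v X n i) $ j)\<^sup>2) \<le> 1 / \<kappa>" for j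
  proof -
    have row: "(A *v x) $ j = (A $ j) \<bullet> x" for x by (simp add: matrix_vector_mult_def inner_vec_def)
    have "G *v (A $ j) = axis j 1"
    proof -
      have "(G *v (A $ j)) $ k = (A ** G) $ j $ k" for k
        by (simp add: G_def gram_def matrix_vector_mult_def matrix_matrix_mult_def mult.commute)
      then show ?thesis
        using matrix_inv_left[OF invertible_if_coercive[OF coercive' \<open>\<kappa> > 0\<close>]]
        by (simp add: A_def vec_eq_iff mat_def axis_def)
    qed
    have "(\<Sum>i<n. ((A *v X n i) $ j)\<^sup>2) = (A $ j) \<bullet> (G *v (A $ j))"
      by (simp add: row G_def gram_quadratic_form inner_commute)
    also have "\<dots> = A $ j $ j"
      by (simp add: \<open>G *v (A $ j) = axis j 1\<close> inner_axis)
    also have "\<dots> = axis j 1 \<bullet> (A *v axis j 1)"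
      by (simp add: inner_axis' matrix_vector_mult_basis column_def)
    also have "\<dots> \<le> (norm (axis j (1::real)))\<^sup>2 / \<kappa>"
      unfolding A_def by (rule matrix_inv_quadratic_form_le[OF coercive' \<open>\<kappa> > 0\<close>])
    finally show ?thesis by simp
  qed
  have int_j: "integrable M (\<lambda>\<omega>. (u \<omega> $ j)\<^sup>2)" for j
    unfolding u_comp by (rule integrable_weighted_sum_sq)
  have "(\<integral>\<omega>. (u \<omega> $ j)\<^sup>2 \<partial>M) \<le> \<sigma>\<^sup>2 / \<kappa>" for j
    using mult_left_mono[OF row_sum[of j], of "\<sigma>\<^sup>2"] unfolding u_comp integral_weighted_sum_sq
    by simp
  then have "(\<Sum>j\<in>UNIV. \<integral>\<omega>. (u \<omega> $ j)\<^sup>2 \<partial>M) \<le> real CARD('p) * \<sigma>\<^sup>2 / \<kappa>"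
    using sum_mono[of UNIV "\<lambda>j. \<integral>\<omega>. (u \<omega> $ j)\<^sup>2 \<partial>M" "\<lambda>_. \<sigma>\<^sup>2 / \<kappa>"] by simp
  then show "(\<integral>\<omega>. (norm (u \<omega>))\<^sup>2 \<partial>M) \<le> real CARD('p) * \<sigma>\<^sup>2 / \<kappa>"
    unfolding norm_u using int_j by simp
  show "integrable M (\<lambda>\<omega>. (norm (u \<omega>))\<^sup>2)"
    unfolding norm_u using int_j by simp
qed

end

section \<open>The adaptive Lasso objective\<close>

lemma weighted_l1_least_squares_lower_bound:
  fixes x :: "nat \<Rightarrow> real^'p::finite" and r :: "nat \<Rightarrow> real" and w s :: "'p \<Rightarrow> real"
  assumes subgrad: "\<And>j t. \<bar>b0 $ j\<bar> + s j * (t - b0 $ j) \<le> \<bar>t\<bar>"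
    and w_nonneg: "\<And>j. w j \<ge> 0"
    and coercive: "\<And>d. \<kappa> * (norm d)\<^sup>2 \<le> (\<Sum>i<n. (x i \<bullet> d)\<^sup>2)"
  defines "F \<equiv> \<lambda>b. (\<Sum>i<n. (r i - x i \<bullet> b)\<^sup>2) + 2 * (\<Sum>j\<in>UNIV. w j * \<bar>b $ j\<bar>)"
    and "e \<equiv> - 2 *\<^sub>R (\<Sum>i<n. (r i - x i \<bullet> b0) *\<^sub>R x i) + 2 *\<^sub>R (\<chi> j. w j * s j)"
  shows "F b0 + e \<bullet> (b - b0) + \<kappa> * (norm (b - b0))\<^sup>2 \<le> F b"
proof -
  define d where "d = b - b0"
  have sq: "(\<Sum>i<n. (r i - x i \<bullet> b)\<^sup>2) = (\<Sum>i<n. (r i - x i \<bullet> b0)\<^sup>2)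
       - 2 * (\<Sum>i<n. (r i - x i \<bullet> b0) * (x i \<bullet> d)) + (\<Sum>i<n. (x i \<bullet> d)\<^sup>2)"
  proof -
    have "(r i - x i \<bullet> b)\<^sup>2 = (r i - x i \<bullet> b0)\<^sup>2 - 2 * ((r i - x i \<bullet> b0) * (x i \<bullet> d)) + (x i \<bullet> d)\<^sup>2" for i
      unfolding d_def by (simp add: inner_diff_right power2_eq_square algebra_simps)
    then show ?thesis by (simp add: sum.distrib sum_subtractf sum_distrib_left)
  qed
  have pen: "(\<Sum>j\<in>UNIV. w j * \<bar>b0 $ j\<bar>) + (\<chi> j. w j * s j) \<bullet> d \<le> (\<Sum>j\<in>UNIV. w j * \<bar>b $ j\<bar>)"
  proof -
    have "(\<Sum>j\<in>UNIV. w j * \<bar>b0 $ j\<bar>) + (\<chi> j. w j * s j) \<bullet> d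
        = (\<Sum>j\<in>UNIV. w j * (\<bar>b0 $ j\<bar> + s j * (b $ j - b0 $ j)))"
      unfolding d_def by (simp add: inner_vec_def sum.distrib[symmetric] algebra_simps)
    also have "\<dots> \<le> (\<Sum>j\<in>UNIV. w j * \<bar>b $ j\<bar>)"
      by (intro sum_mono mult_left_mono subgrad w_nonneg)
    finally show ?thesis .
  qed
  have "e \<bullet> d = - 2 * (\<Sum>i<n. (r i - x i \<bullet> b0) * (x i \<bullet> d)) + 2 * ((\<chi> j. w j * s j) \<bullet> d)"
    unfolding e_def by (simp add: inner_add_left inner_diff_left inner_sum_left)
  then show ?thesis using sq pen coercive[of d] unfolding F_def d_def[symmetric] by linarith
qed

lemma minimizer_near_of_quadratic_growth:
  fixes F :: "real^'p::finite \<Rightarrow> real"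
  assumes growth: "\<And>b. F b0 + e \<bullet> (b - b0) + \<kappa> * (norm (b - b0))\<^sup>2 \<le> F b"
    and "\<kappa> > 0" and cont: "continuous_on UNIV F"
  shows "\<exists>b. \<forall>b'. F b \<le> F b'"
    and "\<forall>b'. F b \<le> F b' \<Longrightarrow> norm (b - b0) \<le> norm e / \<kappa>"
proof -
  have near: "norm (b - b0) \<le> norm e / \<kappa>" if "F b \<le> F b0" for b
  proof -
    define d where "d = b - b0"
    have "e \<bullet> d + \<kappa> * (norm d)\<^sup>2 \<le> 0" using growth[of b] that unfolding d_def by simp
    moreover have "- (norm e * norm d) \<le> e \<bullet> d"
      using norm_cauchy_schwarz[of "-e" d] by simp
    ultimately have "\<kappa> * (norm d)\<^sup>2 \<le> norm e * norm d" by simp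
    then have "\<kappa> * norm d \<le> norm e"
      by (cases "d = 0") (auto simp: power2_eq_square)
    then show ?thesis using \<open>\<kappa> > 0\<close> unfolding d_def by (simp add: field_simps)
  qed
  then show "\<forall>b'. F b \<le> F b' \<Longrightarrow> norm (b - b0) \<le> norm e / \<kappa>" by blast
  define R where "R = norm e / \<kappa>"
  have "b0 \<in> cball b0 R" using \<open>\<kappa> > 0\<close> by (simp add: R_def)
  then obtain b1 where b1: "b1 \<in> cball b0 R" "\<And>y. y \<in> cball b0 R \<Longrightarrow> F b1 \<le> F y"
    using continuous_attains_inf[OF compact_cball _ continuous_on_subset[OF cont]] by blast
  have "F b1 \<le> F b'" for b'
  proof (cases "b' \<in> cball b0 R")
    case False
    then have "F b0 < F b'"
      using near[of b'] by (force simp: R_def dist_norm norm_minus_commute)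
    then show ?thesis using b1(2)[of b0] \<open>b0 \<in> cball b0 R\<close> by simp
  qed (use b1 in blast)
  then show "\<exists>b. \<forall>b'. F b \<le> F b'" by blast
qed

text \<open>Where beta_LS has a zero coordinate the penalty weight is lam / 0 = 0; the bound is
  unaffected.\<close>
lemma beta_AL_near:
  fixes \<beta> b0 :: "real^'p::finite" and s :: "'p \<Rightarrow> real"
  assumes coercive: "\<And>d. \<kappa> * (norm d)\<^sup>2 \<le> (\<Sum>i<n. (X n i \<bullet> d)\<^sup>2)" and "\<kappa> > 0"
    and lam_nonneg: "\<And>j. lam n j \<ge> 0"
    and sign: "\<And>j. s j * b0 $ j = \<bar>b0 $ j\<bar>" and s_le: "\<And>j. \<bar>s j\<bar> \<le> 1"
  shows "norm (beta_AL X eps lam n \<beta> \<omega> - b0)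
    \<le> 2 * norm (gram X n *v (b0 - \<beta>) - (\<Sum>i<n. eps i \<omega> *\<^sub>R X n i)
                + (\<chi> j. lam n j * s j / \<bar>beta_LS X eps n \<beta> \<omega> $ j\<bar>)) / \<kappa>"
proof -
  define F where "F = AL_obj X eps lam n \<beta> \<omega>"
  define w where "w j = lam n j / \<bar>beta_LS X eps n \<beta> \<omega> $ j\<bar>" for j
  define e where "e = - 2 *\<^sub>R (\<Sum>i<n. (resp X eps n \<beta> \<omega> i - X n i \<bullet> b0) *\<^sub>R X n i)
      + 2 *\<^sub>R (\<chi> j. w j * s j)"
  have F_eq: "F = (\<lambda>b. (\<Sum>i<n. (resp X eps n \<beta> \<omega> i - X n i \<bullet> b)\<^sup>2) + 2 * (\<Sum>j\<in>UNIV. w j * \<bar>b $ j\<bar>))"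
    by (simp add: F_def AL_obj_def w_def fun_eq_iff)
  have subgrad: "\<bar>b0 $ j\<bar> + s j * (t - b0 $ j) \<le> \<bar>t\<bar>" for j t
    using sign[of j] abs_ge_self[of "s j * t"] mult_left_le_one_le[of "\<bar>t\<bar>" "\<bar>s j\<bar>"] s_le[of j]
    by (simp add: algebra_simps abs_mult)
  have growth: "F b0 + e \<bullet> (b - b0) + \<kappa> * (norm (b - b0))\<^sup>2 \<le> F b" for b
    unfolding F_eq e_def
    by (rule weighted_l1_least_squares_lower_bound[OF subgrad _ coercive]) (simp add: w_def lam_nonneg)
  have "continuous_on UNIV F"
    unfolding F_eq by (intro continuous_intros)
  note near = minimizer_near_of_quadratic_growth[OF growth \<open>\<kappa> > 0\<close> this]
  have "\<forall>b'. F (beta_AL X eps lam n \<beta> \<omega>) \<le> F b'"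
    unfolding beta_AL_def F_def[symmetric] by (rule someI_ex[OF near(1)])
  then have "norm (beta_AL X eps lam n \<beta> \<omega> - b0) \<le> norm e / \<kappa>"
    by (rule near(2))
  moreover have "e = 2 *\<^sub>R (gram X n *v (b0 - \<beta>) - (\<Sum>i<n. eps i \<omega> *\<^sub>R X n i)
                + (\<chi> j. lam n j * s j / \<bar>beta_LS X eps n \<beta> \<omega> $ j\<bar>))"
    by (simp add: e_def w_def resp_def gram_mult_vec inner_diff_right algebra_simps
        scaleR_diff_left sum_subtractf scaleR_add_right scaleR_add_left sum.distrib)
  ultimately show ?thesis by simp
qed

section \<open>Shifting a single coordinate\<close>

lemma penalty_small_at_large_shift:
  fixes N T s \<zeta> :: real
  assumes "N \<ge> 2" "0 \<le> T" "T \<le> 1" "\<bar>s\<bar> \<le> 1" "\<bar>\<zeta>\<bar> < 1"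
  shows "\<bar>T * s / \<bar>N + \<zeta>\<bar>\<bar> \<le> 2 / N"
proof -
  have "\<bar>N + \<zeta>\<bar> \<ge> N / 2" and "\<bar>T * s\<bar> \<le> 1"
    using assms by (auto simp: abs_mult mult_le_one)
  then have "\<bar>T * s\<bar> / \<bar>N + \<zeta>\<bar> \<le> 1 / (N / 2)"
    using assms by (intro frac_le) auto
  then show ?thesis by simp
qed

lemma penalty_cancels_at_proportional_shift:
  fixes vj T \<zeta> \<rho> :: real
  assumes vj: "vj \<noteq> 0" and T: "T > 0" and \<zeta>: "\<bar>\<zeta>\<bar> \<le> \<rho> * T" and \<rho>: "\<bar>vj\<bar> * \<rho> < 1/2"
  shows "\<bar>vj + T * (- sgn vj) / \<bar>- T / vj + \<zeta>\<bar>\<bar> \<le> 2 * vj\<^sup>2 * \<rho>"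
proof -
  define a where "a = vj * \<zeta> / T"
  have "\<bar>a\<bar> = \<bar>vj\<bar> * \<bar>\<zeta>\<bar> / T" using T by (simp add: a_def abs_mult)
  also have "\<dots> \<le> \<bar>vj\<bar> * (\<rho> * T) / T"
    using \<zeta> T by (intro divide_right_mono mult_left_mono) auto
  also have "\<dots> = \<bar>vj\<bar> * \<rho>" using T by simp
  finally have a_le: "\<bar>a\<bar> \<le> \<bar>vj\<bar> * \<rho>" .
  then have a_half: "\<bar>1 - a\<bar> \<ge> 1/2" using \<rho> by linarith
  then have "a \<noteq> 1" by auto
  have "- T / vj + \<zeta> = - (T / vj) * (1 - a)" using vj T by (simp add: a_def field_simps)
  then have "\<bar>- T / vj + \<zeta>\<bar> = T / \<bar>vj\<bar> * \<bar>1 - a\<bar>" using T by (simp add: abs_mult)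
  then have "T * (- sgn vj) / \<bar>- T / vj + \<zeta>\<bar> = - vj / \<bar>1 - a\<bar>"
    using vj T a_half by (cases "vj > 0") (auto simp: field_simps)
  moreover have "vj - vj / \<bar>1 - a\<bar> = vj * (\<bar>1 - a\<bar> - 1) / \<bar>1 - a\<bar>"
    using \<open>a \<noteq> 1\<close> by (simp add: field_simps)
  ultimately have "\<bar>vj + T * (- sgn vj) / \<bar>- T / vj + \<zeta>\<bar>\<bar> = \<bar>vj\<bar> * \<bar>\<bar>1 - a\<bar> - 1\<bar> / \<bar>1 - a\<bar>"
    by (simp add: abs_mult)
  also have "\<dots> \<le> \<bar>vj\<bar> * \<bar>a\<bar> / (1/2)"
    using a_half by (intro frac_le mult_left_mono) auto
  also have "\<dots> \<le> \<bar>vj\<bar> * (\<bar>vj\<bar> * \<rho>) / (1/2)"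
    using a_le by (intro divide_right_mono mult_left_mono) auto
  also have "\<dots> = 2 * vj\<^sup>2 * \<rho>" by (simp add: power2_eq_square)
  finally show ?thesis .
qed

lemma penalty_cancels_at_zero:
  fixes mj vj T \<zeta> \<eta> :: real
  assumes "mj * vj > 0" and "T \<ge> 0" and \<zeta>: "\<bar>\<zeta>\<bar> \<le> \<eta>" and \<eta>: "\<eta> < \<bar>mj\<bar> / 2"
  shows "\<bar>vj + T * (- sgn vj * min 1 (mj * vj / T)) / \<bar>- mj + \<zeta>\<bar>\<bar>
           \<le> 2 * (mj * vj) * \<eta> / mj\<^sup>2 + 2 * max 0 (mj * vj - T) / \<bar>mj\<bar>"
proof -
  define q where "q = mj * vj"
  define d where "d = \<bar>- mj + \<zeta>\<bar>"
  have mj: "\<bar>mj\<bar> > 0" and vj: "vj \<noteq> 0" and q: "q > 0" using \<open>mj * vj > 0\<close> by (auto simp: q_def)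
  have d_ge: "d \<ge> \<bar>mj\<bar> / 2" and d_near: "\<bar>d - \<bar>mj\<bar>\<bar> \<le> \<eta>" and d_pos: "d > 0"
    using \<zeta> \<eta> mj unfolding d_def by linarith+
  have vj_eq: "vj = sgn vj * q / \<bar>mj\<bar>"
    using \<open>mj * vj > 0\<close> unfolding q_def by (cases "vj > 0") (auto simp: field_simps zero_less_mult_iff)
  have min_eq: "T * min 1 (q / T) = min T q"
    using \<open>T \<ge> 0\<close> q by (cases "T = 0") (auto simp: min_def field_simps)
  \<comment> \<open>the penalty term equals - sgn vj * min T q / d, which differs from - vj = - sgn vj * q / mj
    by a perturbation of d and by the excess of q over T\<close>
  have "vj + T * (- sgn vj * min 1 (q / T)) / d = sgn vj * ((q / \<bar>mj\<bar> - q / d) + (q - min T q) / d)"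
    using vj_eq min_eq d_pos mj by (simp add: field_simps)
  then have "\<bar>vj + T * (- sgn vj * min 1 (q / T)) / d\<bar> = \<bar>(q / \<bar>mj\<bar> - q / d) + (q - min T q) / d\<bar>"
    using vj by (simp add: abs_mult abs_sgn_eq)
  also have "\<dots> \<le> \<bar>q / \<bar>mj\<bar> - q / d\<bar> + \<bar>q - min T q\<bar> / d"
    using abs_triangle_ineq[of "q / \<bar>mj\<bar> - q / d" "(q - min T q) / d"] d_pos by simp
  finally have split: "\<bar>vj + T * (- sgn vj * min 1 (q / T)) / d\<bar>
      \<le> \<bar>q / \<bar>mj\<bar> - q / d\<bar> + \<bar>q - min T q\<bar> / d" .
  have "q / \<bar>mj\<bar> - q / d = q * (d - \<bar>mj\<bar>) / (\<bar>mj\<bar> * d)"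
    using mj d_pos by (simp add: field_simps)
  then have "\<bar>q / \<bar>mj\<bar> - q / d\<bar> = q * \<bar>d - \<bar>mj\<bar>\<bar> / (\<bar>mj\<bar> * d)"
    using q d_pos mj by (simp add: abs_mult)
  also have "\<dots> \<le> q * \<eta> / (\<bar>mj\<bar> * (\<bar>mj\<bar> / 2))"
    using d_ge d_near mj q by (intro frac_le mult_left_mono mult_mono) (auto simp: zero_less_mult_iff)
  also have "\<dots> = 2 * q * \<eta> / mj\<^sup>2"
    by (simp add: power2_eq_square)
  finally have first: "\<bar>q / \<bar>mj\<bar> - q / d\<bar> \<le> 2 * q * \<eta> / mj\<^sup>2" .
  have "\<bar>q - min T q\<bar> / d \<le> max 0 (q - T) / (\<bar>mj\<bar> / 2)"
    using d_ge mj by (intro frac_le) auto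
  then have second: "\<bar>q - min T q\<bar> / d \<le> 2 * max 0 (q - T) / \<bar>mj\<bar>"
    by (simp add: mult.commute)
  show ?thesis
    using split first second unfolding d_def q_def by linarith
qed

lemma coordinate_shift_zero_score:
  fixes t \<eta> :: "nat \<Rightarrow> real" and vj mj :: real
  assumes "vj = 0" and t_nonneg: "\<And>n. t n \<ge> 0" and t_le_one: "\<forall>\<^sub>F n in sequentially. t n \<le> 1"
    and \<eta>: "\<eta> \<longlonglongrightarrow> 0"
  shows "\<exists>\<gamma> s B. (\<forall>n. s n * (\<gamma> n + mj) = \<bar>\<gamma> n + mj\<bar> \<and> \<bar>s n\<bar> \<le> 1) \<and> B \<longlonglongrightarrow> 0 \<and>
      (\<forall>\<^sub>F n in sequentially. \<forall>\<zeta>. \<bar>\<zeta>\<bar> \<le> \<eta> n \<longrightarrow> \<bar>vj + t n * s n / \<bar>\<gamma> n + \<zeta>\<bar>\<bar> \<le> B n)"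
proof -
  have "(\<lambda>n. 2 / real n) \<longlonglongrightarrow> 0"
    by (intro tendsto_divide_0[OF tendsto_const] filterlim_at_top_imp_at_infinity filterlim_real_sequentially)
  moreover have "\<forall>\<^sub>F n in sequentially. \<eta> n < 1"
    using \<eta> by (auto simp: order_tendsto_iff)
  with t_le_one eventually_ge_at_top[of 2] have "\<forall>\<^sub>F n in sequentially. \<forall>\<zeta>. \<bar>\<zeta>\<bar> \<le> \<eta> n \<longrightarrow>
      \<bar>vj + t n * sgn (real n + mj) / \<bar>real n + \<zeta>\<bar>\<bar> \<le> 2 / real n"
  proof eventually_elim
    case (elim n)
    show ?case
    proof (intro allI impI)
      fix \<zeta> :: real
      assume "\<bar>\<zeta>\<bar> \<le> \<eta> n"
      then have "\<bar>\<zeta>\<bar> < 1" using elim by linarith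
      then show "\<bar>vj + t n * sgn (real n + mj) / \<bar>real n + \<zeta>\<bar>\<bar> \<le> 2 / real n"
        using penalty_small_at_large_shift[of "real n" "t n" "sgn (real n + mj)" \<zeta>] elim t_nonneg[of n]
        by (simp add: \<open>vj = 0\<close> abs_sgn_eq)
    qed
  qed
  moreover have "sgn (real n + mj) * (real n + mj) = \<bar>real n + mj\<bar> \<and> \<bar>sgn (real n + mj)\<bar> \<le> 1" for n
    by (auto simp: sgn_if)
  ultimately show ?thesis
    by (intro exI[of _ "\<lambda>n. real n"] exI[of _ "\<lambda>n. sgn (real n + mj)"] exI[of _ "\<lambda>n. 2 / real n"])
      auto
qed

lemma coordinate_shift_opposite_signs:
  fixes t \<eta> \<rho> :: "nat \<Rightarrow> real" and vj mj :: real
  assumes vj: "vj \<noteq> 0" and opposite: "mj * vj \<le> 0" and t_nonneg: "\<And>n. t n \<ge> 0"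
    and \<rho>: "\<rho> \<longlonglongrightarrow> 0" and small: "\<forall>\<^sub>F n in sequentially. t n > 0 \<and> \<eta> n \<le> \<rho> n * t n"
  shows "\<exists>\<gamma> s B. (\<forall>n. s n * (\<gamma> n + mj) = \<bar>\<gamma> n + mj\<bar> \<and> \<bar>s n\<bar> \<le> 1) \<and> B \<longlonglongrightarrow> 0 \<and>
      (\<forall>\<^sub>F n in sequentially. \<forall>\<zeta>. \<bar>\<zeta>\<bar> \<le> \<eta> n \<longrightarrow> \<bar>vj + t n * s n / \<bar>\<gamma> n + \<zeta>\<bar>\<bar> \<le> B n)"
proof -
  have "\<forall>\<^sub>F n in sequentially. \<bar>vj\<bar> * \<rho> n < 1/2"
    using order_tendstoD(2)[OF tendsto_mult_right_zero[OF \<rho>, of "\<bar>vj\<bar>"], of "1/2"] by simp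
  with small have "\<forall>\<^sub>F n in sequentially. \<forall>\<zeta>. \<bar>\<zeta>\<bar> \<le> \<eta> n \<longrightarrow>
      \<bar>vj + t n * (- sgn vj) / \<bar>- t n / vj + \<zeta>\<bar>\<bar> \<le> 2 * vj\<^sup>2 * \<rho> n"
    by eventually_elim
      (intro allI impI penalty_cancels_at_proportional_shift[OF vj]; auto intro: order_trans)
  moreover have "(\<lambda>n. 2 * vj\<^sup>2 * \<rho> n) \<longlonglongrightarrow> 0"
    using tendsto_mult_right_zero[OF \<rho>] by simp
  moreover have "- sgn vj * (- t n / vj + mj) = \<bar>- t n / vj + mj\<bar>" for n
  proof -
    have "vj * (- t n / vj + mj) \<le> 0"
      using vj opposite t_nonneg[of n] by (simp add: algebra_simps)
    then show ?thesis using vj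
      by (cases "vj > 0") (auto simp: mult_le_0_iff abs_if)
  qed
  moreover have "\<bar>- sgn vj\<bar> \<le> (1::real)" by (simp add: abs_sgn_eq)
  ultimately show ?thesis
    by (intro exI[of _ "\<lambda>n. - t n / vj"] exI[of _ "\<lambda>_. - sgn vj"] exI[of _ "\<lambda>n. 2 * vj\<^sup>2 * \<rho> n"])
      auto
qed

lemma coordinate_shift_same_signs:
  fixes t \<eta> :: "nat \<Rightarrow> real" and vj mj l0 :: real
  assumes q: "mj * vj > 0" and t_nonneg: "\<And>n. t n \<ge> 0" and \<eta>: "\<eta> \<longlonglongrightarrow> 0"
    and t_lim: "t \<longlonglongrightarrow> l0" and l0_ge: "mj * vj \<le> l0"
  shows "\<exists>\<gamma> s B. (\<forall>n. s n * (\<gamma> n + mj) = \<bar>\<gamma> n + mj\<bar> \<and> \<bar>s n\<bar> \<le> 1) \<and> B \<longlonglongrightarrow> 0 \<and>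
      (\<forall>\<^sub>F n in sequentially. \<forall>\<zeta>. \<bar>\<zeta>\<bar> \<le> \<eta> n \<longrightarrow> \<bar>vj + t n * s n / \<bar>\<gamma> n + \<zeta>\<bar>\<bar> \<le> B n)"
proof -
  have vj: "vj \<noteq> 0" using q by auto
  have "\<forall>\<^sub>F n in sequentially. \<eta> n < \<bar>mj\<bar> / 2"
    using order_tendstoD(2)[OF \<eta>, of "\<bar>mj\<bar> / 2"] q by (auto simp: zero_less_mult_iff)
  then have "\<forall>\<^sub>F n in sequentially. \<forall>\<zeta>. \<bar>\<zeta>\<bar> \<le> \<eta> n \<longrightarrow>
      \<bar>vj + t n * (- sgn vj * min 1 (mj * vj / t n)) / \<bar>- mj + \<zeta>\<bar>\<bar>
        \<le> 2 * (mj * vj) * \<eta> n / mj\<^sup>2 + 2 * max 0 (mj * vj - t n) / \<bar>mj\<bar>"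
    by eventually_elim (intro allI impI penalty_cancels_at_zero[OF q t_nonneg])
  moreover have "(\<lambda>n. 2 * (mj * vj) * \<eta> n / mj\<^sup>2 + 2 * max 0 (mj * vj - t n) / \<bar>mj\<bar>)
      \<longlonglongrightarrow> 2 * (mj * vj) * 0 / mj\<^sup>2 + 2 * max 0 (mj * vj - l0) / \<bar>mj\<bar>"
    using q by (intro tendsto_intros \<eta> t_lim) auto
  moreover have "max 0 (mj * vj - l0) = 0" using l0_ge by simp
  moreover have "\<bar>- sgn vj * min 1 (mj * vj / t n)\<bar> \<le> 1" for n
    using q t_nonneg[of n] vj by (simp add: abs_mult abs_sgn_eq)
  ultimately show ?thesis
    by (intro exI[of _ "\<lambda>_. - mj"] exI[of _ "\<lambda>n. - sgn vj * min 1 (mj * vj / t n)"]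
        exI[of _ "\<lambda>n. 2 * (mj * vj) * \<eta> n / mj\<^sup>2 + 2 * max 0 (mj * vj - t n) / \<bar>mj\<bar>"]) auto
qed

text \<open>The shift gamma of one coordinate is chosen so that the penalty term cancels vj:
  far away if vj = 0, proportional to t if the signs of mj and vj disagree, and at zero
  otherwise, where the subgradient can absorb the excess.\<close>
lemma exists_coordinate_shift:
  fixes t \<eta> :: "nat \<Rightarrow> real" and vj mj l0 :: real
  assumes t_nonneg: "\<And>n. t n \<ge> 0" and t_le_one: "\<forall>\<^sub>F n in sequentially. t n \<le> 1"
    and \<eta>: "\<eta> \<longlonglongrightarrow> 0"
    and t_lim: "vj \<noteq> 0 \<Longrightarrow> t \<longlonglongrightarrow> l0" and l0_ge: "vj \<noteq> 0 \<Longrightarrow> mj * vj \<le> l0"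
    and \<eta>_small: "vj \<noteq> 0 \<Longrightarrow> \<exists>\<rho>. \<rho> \<longlonglongrightarrow> 0 \<and> (\<forall>\<^sub>F n in sequentially. t n > 0 \<and> \<eta> n \<le> \<rho> n * t n)"
  shows "\<exists>\<gamma> s B. (\<forall>n. s n * (\<gamma> n + mj) = \<bar>\<gamma> n + mj\<bar> \<and> \<bar>s n\<bar> \<le> 1) \<and> B \<longlonglongrightarrow> 0 \<and>
      (\<forall>\<^sub>F n in sequentially. \<forall>\<zeta>. \<bar>\<zeta>\<bar> \<le> \<eta> n \<longrightarrow> \<bar>vj + t n * s n / \<bar>\<gamma> n + \<zeta>\<bar>\<bar> \<le> B n)"
proof -
  consider "vj = 0" | "vj \<noteq> 0" "mj * vj \<le> 0" | "mj * vj > 0"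
    by fastforce
  then show ?thesis
  proof cases
    case 1
    then show ?thesis by (rule coordinate_shift_zero_score[OF _ t_nonneg t_le_one \<eta>])
  next
    case 2
    with \<eta>_small obtain \<rho> where "\<rho> \<longlonglongrightarrow> 0" "\<forall>\<^sub>F n in sequentially. t n > 0 \<and> \<eta> n \<le> \<rho> n * t n"
      by blast
    with 2 show ?thesis by (intro coordinate_shift_opposite_signs t_nonneg)
  next
    case 3
    then have "vj \<noteq> 0" by auto
    with 3 show ?thesis by (intro coordinate_shift_same_signs[OF _ t_nonneg \<eta> t_lim l0_ge])
  qed
qed

section \<open>Every point of Mset is a limit of rescaled errors\<close>

locale adaptive_lasso_limit_point = iid_errors +
  fixes X :: "nat \<Rightarrow> nat \<Rightarrow> real^'p::finite"
    and C :: "real^'p^'p" and lam :: "nat \<Rightarrow> 'p \<Rightarrow> real"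
    and lam0 :: "'p \<Rightarrow> real" and \<psi> :: "'p \<Rightarrow> ereal" and m :: "real^'p"
  assumes C_lim: "(\<lambda>n. (1 / real n) *\<^sub>R gram X n) \<longlonglongrightarrow> C"
    and C_pd: "pos_def_mat C"
    and lam_nonneg: "\<And>n j. lam n j \<ge> 0"
    and lamstar_inf: "filterlim (lamstar lam) at_top sequentially"
    and lam0_lim: "\<And>j. (\<lambda>n. lam n j / lamstar lam n) \<longlonglongrightarrow> lam0 j"
    and psi_lim: "\<And>j. (\<lambda>n. psi_ratio lam n j) \<longlonglongrightarrow> \<psi> j"
    and psi_range: "\<And>j. \<psi> j = 0 \<or> \<psi> j = \<infinity>"
    and m_in_M: "m \<in> Mset C lam0 \<psi>"
begin

definition scale :: "nat \<Rightarrow> real" where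
  "scale n = sqrt (lamstar lam n / real n)"

text \<open>noise n \<omega> is the least-squares error beta_LS - beta, see beta_LS_eq.\<close>

definition noise :: "nat \<Rightarrow> 'a \<Rightarrow> real^'p" where
  "noise n \<omega> = matrix_inv (gram X n) *v (\<Sum>i<n. eps i \<omega> *\<^sub>R X n i)"

lemma noise_measurable [measurable]: "noise n \<in> borel_measurable M"
proof -
  have "noise n = (\<lambda>\<omega>. \<Sum>i<n. eps i \<omega> *\<^sub>R (matrix_inv (gram X n) *v X n i))"
    by (simp add: fun_eq_iff noise_def vec.sum matrix_vector_mult_scaleR)
  then show ?thesis using eps_meas by simp
qed

lemma lam_le_lamstar: "lam n j \<le> lamstar lam n"
  unfolding lamstar_def by (rule Max_ge) auto

lemma lamstar_nonneg: "lamstar lam n \<ge> 0"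
  using lam_nonneg order_trans lam_le_lamstar by blast

lemma eventually_lamstar_pos: "\<forall>\<^sub>F n in sequentially. lamstar lam n > 0"
  using lamstar_inf unfolding filterlim_at_top_dense by blast

lemma radius_tendsto_zero: "(\<lambda>n. K / sqrt (lamstar lam n)) \<longlonglongrightarrow> 0"
  by (intro tendsto_divide_0[OF tendsto_const] filterlim_at_top_imp_at_infinity
      filterlim_compose[OF sqrt_at_top lamstar_inf])

lemma
  assumes "(C *v m) $ j \<noteq> 0"
  shows active_score_le: "m $ j * (C *v m) $ j \<le> lam0 j"
    and active_lam_pos: "\<forall>\<^sub>F n in sequentially. lam n j > 0"
    and active_ratio_tendsto_zero: "(\<lambda>n. sqrt (lamstar lam n) / lam n j) \<longlonglongrightarrow> 0"
proof -
  have "\<psi> j \<noteq> \<infinity>" using m_in_M assms unfolding Mset_def by auto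
  then have \<psi>: "\<psi> j = 0" using psi_range[of j] by auto
  then show "m $ j * (C *v m) $ j \<le> lam0 j"
    using m_in_M unfolding Mset_def by auto
  have lim: "(\<lambda>n. psi_ratio lam n j) \<longlonglongrightarrow> 0" using psi_lim[of j] \<psi> by simp
  have "\<forall>\<^sub>F n in sequentially. psi_ratio lam n j < ereal 1"
    using order_tendstoD(2)[OF lim, of "ereal 1"] by simp
  then show pos: "\<forall>\<^sub>F n in sequentially. lam n j > 0"
    by eventually_elim (use lam_nonneg in \<open>auto simp: psi_ratio_def less_le split: if_splits\<close>)
  show "(\<lambda>n. sqrt (lamstar lam n) / lam n j) \<longlonglongrightarrow> 0"
  proof (rule order_tendstoI)
    fix a :: real assume "a < 0"
    then show "\<forall>\<^sub>F n in sequentially. a < sqrt (lamstar lam n) / lam n j"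
      by (intro always_eventually allI order.strict_trans2[OF \<open>a < 0\<close>] divide_nonneg_nonneg
          real_sqrt_ge_zero lamstar_nonneg lam_nonneg)
  next
    fix a :: real assume "a > 0"
    then have "\<forall>\<^sub>F n in sequentially. psi_ratio lam n j < ereal a"
      using order_tendstoD(2)[OF lim, of "ereal a"] by simp
    with pos show "\<forall>\<^sub>F n in sequentially. sqrt (lamstar lam n) / lam n j < a"
      by eventually_elim (auto simp: psi_ratio_def)
  qed
qed

lemma noise_bounded_in_probability:
  assumes "r > 0"
  shows "\<exists>K>0. \<forall>\<^sub>F n in sequentially. measure M {\<omega> \<in> space M. K \<le> sqrt (real n) * norm (noise n \<omega>)} < r"
proof -
  obtain c where "c > 0" and coercive:
    "\<forall>\<^sub>F n in sequentially. \<forall>d. real n * c * (norm d)\<^sup>2 \<le> (\<Sum>i<n. (X n i \<bullet> d)\<^sup>2)"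
    using eventually_gram_coercive[OF C_lim C_pd] by blast
  define V where "V = real CARD('p) * \<sigma>\<^sup>2 / c"
  define K where "K = sqrt (V / r) + 1"
  have "V / r \<ge> 0" using \<open>c > 0\<close> \<open>r > 0\<close> by (simp add: V_def)
  then have "V / r < K\<^sup>2"
    using power_strict_mono[of "sqrt (V / r)" K 2] by (simp add: K_def)
  then have "V < K\<^sup>2 * r" using \<open>r > 0\<close> by (simp add: pos_divide_less_eq)
  moreover have "K > 0" using \<open>V / r \<ge> 0\<close> by (simp add: K_def add_nonneg_pos)
  ultimately have K: "K > 0" "V / K\<^sup>2 < r" by (simp_all add: divide_less_eq mult.commute)
  have "\<forall>\<^sub>F n in sequentially. measure M {\<omega> \<in> space M. K \<le> sqrt (real n) * norm (noise n \<omega>)} < r"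
    using coercive eventually_ge_at_top[of 1]
  proof eventually_elim
    case (elim n)
    then have "real n * c > 0" using \<open>c > 0\<close> by simp
    note moment = noise_second_moment[of "real n * c" X n, OF elim(1)[rule_format] this, folded noise_def]
    have sq: "(sqrt (real n) * norm (noise n \<omega>))\<^sup>2 = real n * (norm (noise n \<omega>))\<^sup>2" for \<omega>
      by (simp add: power_mult_distrib)
    have "measure M {\<omega> \<in> space M. K \<le> sqrt (real n) * norm (noise n \<omega>)}
        = measure M {\<omega> \<in> space M. K \<le> \<bar>sqrt (real n) * norm (noise n \<omega>)\<bar>}"
      by simp
    also have "\<dots> \<le> (\<integral>\<omega>. (sqrt (real n) * norm (noise n \<omega>))\<^sup>2 \<partial>M) / K\<^sup>2"
      by (rule second_moment_method) (use moment(1) K(1) in \<open>auto simp: sq\<close>)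
    also have "\<dots> = real n * (\<integral>\<omega>. (norm (noise n \<omega>))\<^sup>2 \<partial>M) / K\<^sup>2"
      unfolding sq by simp
    also have "\<dots> \<le> real n * (real CARD('p) * \<sigma>\<^sup>2 / (real n * c)) / K\<^sup>2"
      using moment(2) elim by (intro divide_right_mono mult_left_mono) auto
    also have "\<dots> = V / K\<^sup>2" using elim by (simp add: V_def)
    finally show ?case using K(2) by linarith
  qed
  with K(1) show ?thesis by blast
qed

lemma exists_shifts:
  assumes "K > 0"
  shows "\<exists>\<gamma> s B. \<forall>j. (\<forall>n. s j n * (\<gamma> j n + m $ j) = \<bar>\<gamma> j n + m $ j\<bar> \<and> \<bar>s j n\<bar> \<le> 1) \<and>
    B j \<longlonglongrightarrow> 0 \<and>
    (\<forall>\<^sub>F n in sequentially. \<forall>\<zeta>. \<bar>\<zeta>\<bar> \<le> K / sqrt (lamstar lam n) \<longrightarrow>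
       \<bar>(C *v m) $ j + lam n j / lamstar lam n * s j n / \<bar>\<gamma> j n + \<zeta>\<bar>\<bar> \<le> B j n)"
proof -
  define P where "P j \<gamma> s B \<longleftrightarrow> (\<forall>n. s n * (\<gamma> n + m $ j) = \<bar>\<gamma> n + m $ j\<bar> \<and> \<bar>s n\<bar> \<le> 1) \<and>
    B \<longlonglongrightarrow> 0 \<and> (\<forall>\<^sub>F n in sequentially. \<forall>\<zeta>. \<bar>\<zeta>\<bar> \<le> K / sqrt (lamstar lam n) \<longrightarrow>
       \<bar>(C *v m) $ j + lam n j / lamstar lam n * s n / \<bar>\<gamma> n + \<zeta>\<bar>\<bar> \<le> B n)"
    for j and \<gamma> s B :: "nat \<Rightarrow> real"
  have "\<exists>\<gamma> s B. P j \<gamma> s B" for j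
    unfolding P_def
  proof (rule exists_coordinate_shift)
    show "lam n j / lamstar lam n \<ge> 0" for n
      by (simp add: lam_nonneg lamstar_nonneg)
    show "\<forall>\<^sub>F n in sequentially. lam n j / lamstar lam n \<le> 1"
      using eventually_lamstar_pos by eventually_elim (simp add: lam_le_lamstar)
    show "(\<lambda>n. K / sqrt (lamstar lam n)) \<longlonglongrightarrow> 0" by (rule radius_tendsto_zero)
    show "(\<lambda>n. lam n j / lamstar lam n) \<longlonglongrightarrow> lam0 j" by (rule lam0_lim)
    show "m $ j * (C *v m) $ j \<le> lam0 j" if "(C *v m) $ j \<noteq> 0"
      using that by (rule active_score_le)
    assume active: "(C *v m) $ j \<noteq> 0"
    have "\<forall>\<^sub>F n in sequentially. lam n j / lamstar lam n > 0 \<and>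
        K / sqrt (lamstar lam n) \<le> K * (sqrt (lamstar lam n) / lam n j) * (lam n j / lamstar lam n)"
      using active_lam_pos[OF active] eventually_lamstar_pos
    proof eventually_elim
      case (elim n)
      have "K * (sqrt (lamstar lam n) / lam n j) * (lam n j / lamstar lam n)
          = K * (sqrt (lamstar lam n) / lamstar lam n)"
        using elim by simp
      also have "\<dots> = K / sqrt (lamstar lam n)"
        using elim by (simp add: field_simps)
      finally show ?case using elim by simp
    qed
    moreover have "(\<lambda>n. K * (sqrt (lamstar lam n) / lam n j)) \<longlonglongrightarrow> 0"
      using tendsto_mult_right_zero[OF active_ratio_tendsto_zero[OF active]] by simp
    ultimately show "\<exists>\<rho>. \<rho> \<longlonglongrightarrow> 0 \<and> (\<forall>\<^sub>F n in sequentially. lam n j / lamstar lam n > 0 \<and>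
        K / sqrt (lamstar lam n) \<le> \<rho> n * (lam n j / lamstar lam n))"
      by blast
  qed
  then have "\<exists>\<gamma> s B. \<forall>j. P j (\<gamma> j) (s j) (B j)" by metis
  then show ?thesis unfolding P_def .
qed

lemma shifted_residual_eq:
  fixes \<gamma> s :: "'p \<Rightarrow> real" and \<omega> :: 'a
  assumes inv: "invertible (gram X n)" and "n \<ge> 1" and "lamstar lam n > 0"
  defines "\<beta> \<equiv> \<chi> j. scale n * \<gamma> j" and "\<zeta> \<equiv> (1 / scale n) *\<^sub>R noise n \<omega>"
  shows "gram X n *v (scale n *\<^sub>R m) - (\<Sum>i<n. eps i \<omega> *\<^sub>R X n i)
      + (\<chi> j. lam n j * s j / \<bar>beta_LS X eps n \<beta> \<omega> $ j\<bar>)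
    = (real n * scale n) *\<^sub>R ((1 / real n) *\<^sub>R gram X n *v (m - \<zeta>)
      + (\<chi> j. lam n j / lamstar lam n * s j / \<bar>\<gamma> j + \<zeta> $ j\<bar>))"
proof -
  define c where "c = scale n"
  define G where "G = gram X n"
  have n: "real n > 0" using \<open>n \<ge> 1\<close> by simp
  have c: "c > 0" using n \<open>lamstar lam n > 0\<close> by (simp add: c_def scale_def)
  have nc2: "lamstar lam n = real n * c\<^sup>2"
    using n \<open>lamstar lam n > 0\<close> by (simp add: c_def scale_def)
  have noise: "noise n \<omega> = c *\<^sub>R \<zeta>" using c by (simp add: \<zeta>_def c_def)
  have "G *v noise n \<omega> = (\<Sum>i<n. eps i \<omega> *\<^sub>R X n i)"
    by (simp add: noise_def G_def matrix_vector_mul_assoc matrix_inv_right[OF inv])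
  then have S: "(\<Sum>i<n. eps i \<omega> *\<^sub>R X n i) = c *\<^sub>R (G *v \<zeta>)"
    by (simp add: noise matrix_vector_mult_scaleR)
  have "beta_LS X eps n \<beta> \<omega> = \<beta> + noise n \<omega>"
    using beta_LS_eq[OF inv, of eps \<beta> \<omega>] by (simp add: noise_def)
  then have LS: "beta_LS X eps n \<beta> \<omega> $ j = c * (\<gamma> j + \<zeta> $ j)" for j
    by (simp add: noise \<beta>_def c_def algebra_simps)
  have "lam n j * s j / (c * a) = (real n * c) * (lam n j / (real n * c\<^sup>2) * s j / a)" for j a
    using c n by (cases "a = 0") (simp_all add: power2_eq_square field_simps)
  then have "(\<chi> j. lam n j * s j / \<bar>beta_LS X eps n \<beta> \<omega> $ j\<bar>)
      = (real n * c) *\<^sub>R (\<chi> j. lam n j / lamstar lam n * s j / \<bar>\<gamma> j + \<zeta> $ j\<bar>)"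
    using c by (simp add: vec_eq_iff LS nc2 abs_mult)
  moreover have "G *v (c *\<^sub>R m) - c *\<^sub>R (G *v \<zeta>) = (real n * c) *\<^sub>R ((1 / real n) *\<^sub>R G *v (m - \<zeta>))"
    using n by (simp add: matrix_vector_mult_diff_distrib scaleR_matrix_vector_assoc
        matrix_vector_mult_scaleR scaleR_diff_right)
  ultimately show ?thesis
    by (simp add: S c_def[symmetric] G_def[symmetric] scaleR_add_right)
qed

lemma beta_AL_near_shift:
  fixes \<gamma> s B :: "'p \<Rightarrow> real" and c0 K :: real and \<omega> :: 'a
  assumes coercive: "\<And>d. real n * c0 * (norm d)\<^sup>2 \<le> (\<Sum>i<n. (X n i \<bullet> d)\<^sup>2)"
    and "c0 > 0" and "n \<ge> 1" and "lamstar lam n > 0"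
    and sign: "\<And>j. s j * (\<gamma> j + m $ j) = \<bar>\<gamma> j + m $ j\<bar>" and s_le: "\<And>j. \<bar>s j\<bar> \<le> 1"
    and small: "sqrt (real n) * norm (noise n \<omega>) < K"
    and bound: "\<And>j \<zeta>. \<bar>\<zeta>\<bar> \<le> K / sqrt (lamstar lam n) \<Longrightarrow>
      \<bar>(C *v m) $ j + lam n j / lamstar lam n * s j / \<bar>\<gamma> j + \<zeta>\<bar>\<bar> \<le> B j"
  defines "\<beta> \<equiv> \<chi> j. scale n * \<gamma> j" and "G \<equiv> (1 / real n) *\<^sub>R gram X n"
  shows "norm (beta_AL X eps lam n \<beta> \<omega> - (\<beta> + scale n *\<^sub>R m))
    \<le> 2 * scale n / c0 * ((\<Sum>i\<in>UNIV. \<Sum>j\<in>UNIV. \<bar>(G - C) $ i $ j\<bar>) * norm m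
      + (\<Sum>i\<in>UNIV. \<Sum>j\<in>UNIV. \<bar>G $ i $ j\<bar>) * (K / sqrt (lamstar lam n)) + (\<Sum>j\<in>UNIV. B j))"
proof -
  define c where "c = scale n"
  define \<zeta> where "\<zeta> = (1 / c) *\<^sub>R noise n \<omega>"
  define V where "V = G *v (m - \<zeta>) + (\<chi> j. lam n j / lamstar lam n * s j / \<bar>\<gamma> j + \<zeta> $ j\<bar>)"
  have n: "real n > 0" using \<open>n \<ge> 1\<close> by simp
  have c_eq: "c = sqrt (lamstar lam n) / sqrt (real n)" and c: "c > 0"
    using n \<open>lamstar lam n > 0\<close> by (simp_all add: c_def scale_def real_sqrt_divide)
  have "real n * c0 > 0" using n \<open>c0 > 0\<close> by simp
  then have inv: "invertible (gram X n)"
    using invertible_if_coercive[of "real n * c0" "gram X n"] coercive by (simp add: gram_quadratic_form)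
  have sign': "s j * (\<beta> + c *\<^sub>R m) $ j = \<bar>(\<beta> + c *\<^sub>R m) $ j\<bar>" for j
  proof -
    have "(\<beta> + c *\<^sub>R m) $ j = c * (\<gamma> j + m $ j)" by (simp add: \<beta>_def c_def algebra_simps)
    moreover have "s j * (c * (\<gamma> j + m $ j)) = c * (s j * (\<gamma> j + m $ j))" by simp
    ultimately show ?thesis using sign[of j] c by (simp add: abs_mult)
  qed
  have "norm (beta_AL X eps lam n \<beta> \<omega> - (\<beta> + c *\<^sub>R m)) \<le> 2 * norm ((real n * c) *\<^sub>R V) / (real n * c0)"
    using beta_AL_near[of "real n * c0" X n lam, OF coercive \<open>real n * c0 > 0\<close> lam_nonneg sign' s_le,
        where eps = eps and \<beta> = \<beta> and \<omega> = \<omega>]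
      shifted_residual_eq[OF inv \<open>n \<ge> 1\<close> \<open>lamstar lam n > 0\<close>, where s = s and \<gamma> = \<gamma> and \<omega> = \<omega>]
    by (simp add: \<beta>_def V_def G_def \<zeta>_def c_def)
  also have "\<dots> = 2 * c / c0 * norm V"
    using n c \<open>c0 > 0\<close> by (simp add: field_simps)
  finally have "norm (beta_AL X eps lam n \<beta> \<omega> - (\<beta> + c *\<^sub>R m)) \<le> 2 * c / c0 * norm V" .
  moreover have "norm V \<le> (\<Sum>i\<in>UNIV. \<Sum>j\<in>UNIV. \<bar>(G - C) $ i $ j\<bar>) * norm m
      + (\<Sum>i\<in>UNIV. \<Sum>j\<in>UNIV. \<bar>G $ i $ j\<bar>) * (K / sqrt (lamstar lam n)) + (\<Sum>j\<in>UNIV. B j)"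
  proof -
    have "norm \<zeta> = sqrt (real n) * norm (noise n \<omega>) / sqrt (lamstar lam n)"
      using c_eq c n lamstar_nonneg[of n] by (simp add: \<zeta>_def)
    then have \<zeta>_le: "norm \<zeta> \<le> K / sqrt (lamstar lam n)"
      using small lamstar_nonneg[of n] by (simp add: divide_right_mono)
    then have "\<bar>\<zeta> $ j\<bar> \<le> K / sqrt (lamstar lam n)" for j
      using component_le_norm_cart[of \<zeta> j] by linarith
    then have "(\<Sum>j\<in>UNIV. \<bar>(C *v m) $ j + lam n j / lamstar lam n * s j / \<bar>\<gamma> j + \<zeta> $ j\<bar>\<bar>) \<le> (\<Sum>j\<in>UNIV. B j)"
      by (intro sum_mono bound)
    moreover have "(\<Sum>i\<in>UNIV. \<Sum>j\<in>UNIV. \<bar>G $ i $ j\<bar>) * norm \<zeta>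
        \<le> (\<Sum>i\<in>UNIV. \<Sum>j\<in>UNIV. \<bar>G $ i $ j\<bar>) * (K / sqrt (lamstar lam n))"
      using \<zeta>_le by (intro mult_left_mono sum_nonneg) auto
    ultimately show ?thesis
      using norm_matrix_residual_le[of G m \<zeta> "\<lambda>j. lam n j / lamstar lam n * s j / \<bar>\<gamma> j + \<zeta> $ j\<bar>" C]
      unfolding V_def by linarith
  qed
  moreover have "2 * c / c0 \<ge> 0" using c \<open>c0 > 0\<close> by simp
  ultimately show ?thesis unfolding c_def by (meson mult_left_mono order_trans)
qed

lemma eventually_beta_AL_near_shift:
  assumes "K > 0" "\<delta> > 0"
  shows "\<exists>\<beta>. \<forall>\<^sub>F n in sequentially. \<forall>\<omega>. sqrt (real n) * norm (noise n \<omega>) < K \<longrightarrow>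
    norm (beta_AL X eps lam n (\<beta> n) \<omega> - (\<beta> n + scale n *\<^sub>R m)) < scale n * \<delta>"
proof -
  obtain \<gamma> s B where sign: "\<And>j n. s j n * (\<gamma> j n + m $ j) = \<bar>\<gamma> j n + m $ j\<bar>"
    and s_le: "\<And>j n. \<bar>s j n\<bar> \<le> 1" and B: "\<And>j. B j \<longlonglongrightarrow> 0"
    and bound: "\<And>j. \<forall>\<^sub>F n in sequentially. \<forall>\<zeta>. \<bar>\<zeta>\<bar> \<le> K / sqrt (lamstar lam n) \<longrightarrow>
       \<bar>(C *v m) $ j + lam n j / lamstar lam n * s j n / \<bar>\<gamma> j n + \<zeta>\<bar>\<bar> \<le> B j n"
    using exists_shifts[OF \<open>K > 0\<close>] by blast
  obtain c0 where "c0 > 0" and coercive: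
    "\<forall>\<^sub>F n in sequentially. \<forall>d. real n * c0 * (norm d)\<^sup>2 \<le> (\<Sum>i<n. (X n i \<bullet> d)\<^sup>2)"
    using eventually_gram_coercive[OF C_lim C_pd] by blast
  define G where "G n = (1 / real n) *\<^sub>R gram X n" for n
  define D where "D n = (\<Sum>i\<in>UNIV. \<Sum>j\<in>UNIV. \<bar>(G n - C) $ i $ j\<bar>) * norm m
      + (\<Sum>i\<in>UNIV. \<Sum>j\<in>UNIV. \<bar>G n $ i $ j\<bar>) * (K / sqrt (lamstar lam n)) + (\<Sum>j\<in>UNIV. B j n)" for n
  have "G \<longlonglongrightarrow> C" using C_lim by (simp add: G_def[abs_def])
  have "(\<lambda>n. \<Sum>i\<in>UNIV. \<Sum>j\<in>UNIV. \<bar>(G n - C) $ i $ j\<bar>) \<longlonglongrightarrow> 0"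
    using tendsto_entrywise_abs_sum[OF tendsto_diff[OF \<open>G \<longlonglongrightarrow> C\<close> tendsto_const[of C]]] by simp
  moreover have "(\<lambda>n. \<Sum>j\<in>UNIV. B j n) \<longlonglongrightarrow> 0"
    by (rule tendsto_null_sum) (rule B)
  ultimately have "D \<longlonglongrightarrow> 0 * norm m + (\<Sum>i\<in>UNIV. \<Sum>j\<in>UNIV. \<bar>C $ i $ j\<bar>) * 0 + 0"
    unfolding D_def
    by (intro tendsto_add tendsto_mult tendsto_const radius_tendsto_zero
        tendsto_entrywise_abs_sum[OF \<open>G \<longlonglongrightarrow> C\<close>])
  then have "\<forall>\<^sub>F n in sequentially. D n < c0 * \<delta> / 2"
    using order_tendstoD(2)[of D 0 sequentially "c0 * \<delta> / 2"] \<open>c0 > 0\<close> \<open>\<delta> > 0\<close> by simp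
  moreover have "\<forall>\<^sub>F n in sequentially. \<forall>j. \<forall>\<zeta>. \<bar>\<zeta>\<bar> \<le> K / sqrt (lamstar lam n) \<longrightarrow>
       \<bar>(C *v m) $ j + lam n j / lamstar lam n * s j n / \<bar>\<gamma> j n + \<zeta>\<bar>\<bar> \<le> B j n"
    using bound by (rule eventually_all_finite)
  ultimately have "\<forall>\<^sub>F n in sequentially. \<forall>\<omega>. sqrt (real n) * norm (noise n \<omega>) < K \<longrightarrow>
    norm (beta_AL X eps lam n (\<chi> j. scale n * \<gamma> j n) \<omega> - ((\<chi> j. scale n * \<gamma> j n) + scale n *\<^sub>R m))
      < scale n * \<delta>"
    using coercive eventually_lamstar_pos eventually_ge_at_top[of 1]
  proof eventually_elim
    case (elim n)
    have "scale n > 0" using elim by (simp add: scale_def)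
    show ?case
    proof (intro allI impI)
      fix \<omega> assume "sqrt (real n) * norm (noise n \<omega>) < K"
      then have "norm (beta_AL X eps lam n (\<chi> j. scale n * \<gamma> j n) \<omega> - ((\<chi> j. scale n * \<gamma> j n) + scale n *\<^sub>R m))
          \<le> 2 * scale n / c0 * D n"
        unfolding D_def G_def
        by (intro beta_AL_near_shift[OF elim(3)[rule_format] \<open>c0 > 0\<close> elim(5) elim(4) sign s_le])
          (use elim(2) in auto)
      also have "\<dots> < scale n * \<delta>"
        using elim(1) \<open>scale n > 0\<close> \<open>c0 > 0\<close> by (simp add: field_simps)
      finally show "norm (beta_AL X eps lam n (\<chi> j. scale n * \<gamma> j n) \<omega>
          - ((\<chi> j. scale n * \<gamma> j n) + scale n *\<^sub>R m)) < scale n * \<delta>" .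
    qed
  qed
  then show ?thesis by (rule exI[of _ "\<lambda>n. \<chi> j. scale n * \<gamma> j n"])
qed

lemma eventually_coverage_small:
  assumes "r > 0" "\<delta> > 0" and far: "\<And>s. s \<in> S \<Longrightarrow> \<delta> \<le> norm (s - m)"
  shows "\<forall>\<^sub>F n in sequentially. \<exists>\<beta>.
    measure M {\<omega> \<in> space M. \<beta> \<in> (\<lambda>s. beta_AL X eps lam n \<beta> \<omega> - scale n *\<^sub>R s) ` S} < r"
proof -
  obtain K where "K > 0" and tight:
    "\<forall>\<^sub>F n in sequentially. measure M {\<omega> \<in> space M. K \<le> sqrt (real n) * norm (noise n \<omega>)} < r"
    using noise_bounded_in_probability[OF \<open>r > 0\<close>] by blast
  obtain \<beta> where near: "\<forall>\<^sub>F n in sequentially. \<forall>\<omega>. sqrt (real n) * norm (noise n \<omega>) < K \<longrightarrow>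
      norm (beta_AL X eps lam n (\<beta> n) \<omega> - (\<beta> n + scale n *\<^sub>R m)) < scale n * \<delta>"
    using eventually_beta_AL_near_shift[OF \<open>K > 0\<close> \<open>\<delta> > 0\<close>] by blast
  from tight near eventually_lamstar_pos eventually_ge_at_top[of 1]
  show ?thesis
  proof eventually_elim
    case (elim n)
    have "scale n > 0" using elim by (simp add: scale_def)
    \<comment> \<open>a covering beta n forces the rescaled error into S, hence at least delta away from m\<close>
    have "{\<omega> \<in> space M. \<beta> n \<in> (\<lambda>s. beta_AL X eps lam n (\<beta> n) \<omega> - scale n *\<^sub>R s) ` S}
        \<subseteq> {\<omega> \<in> space M. K \<le> sqrt (real n) * norm (noise n \<omega>)}"
    proof safe
      fix \<omega> s assume "\<omega> \<in> space M" "s \<in> S" and eq: "\<beta> n = beta_AL X eps lam n (\<beta> n) \<omega> - scale n *\<^sub>R s"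
      have "norm (beta_AL X eps lam n (\<beta> n) \<omega> - (\<beta> n + scale n *\<^sub>R m)) = scale n * norm (s - m)"
        using \<open>scale n > 0\<close> by (subst eq) (simp add: scaleR_diff_right[symmetric])
      also have "\<dots> \<ge> scale n * \<delta>" using far[OF \<open>s \<in> S\<close>] \<open>scale n > 0\<close> by simp
      finally show "K \<le> sqrt (real n) * norm (noise n \<omega>)"
        using elim(2) by (meson not_less)
    qed
    then have "measure M {\<omega> \<in> space M. \<beta> n \<in> (\<lambda>s. beta_AL X eps lam n (\<beta> n) \<omega> - scale n *\<^sub>R s) ` S}
        \<le> measure M {\<omega> \<in> space M. K \<le> sqrt (real n) * norm (noise n \<omega>)}"
      by (rule finite_measure_mono) measurable
    with elim(1) show ?case by (intro exI[of _ "\<beta> n"]) linarith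
  qed
qed

end

theorem mainTheorem14:
  fixes M :: "'a measure"
    and eps :: "nat \<Rightarrow> 'a \<Rightarrow> real"
    and X :: "nat \<Rightarrow> nat \<Rightarrow> real ^ 'p::finite"
    and C :: "real ^ 'p ^ 'p"
    and \<sigma> :: real
    and lam :: "nat \<Rightarrow> 'p \<Rightarrow> real"
    and lam0 :: "'p \<Rightarrow> real"
    and \<psi> :: "'p \<Rightarrow> ereal"
    and Cset :: "(real ^ 'p) set"
  assumes M: "prob_space M"
    and eps_meas: "\<And>i. eps i \<in> borel_measurable M"
    and eps_indep: "prob_space.indep_vars M (\<lambda>_. borel) eps UNIV"
    and eps_ident: "\<And>i. distr M borel (eps i) = distr M borel (eps 0)"
    and eps_int: "integrable M (eps 0)"
    and eps_mean: "(\<integral>\<omega>. eps 0 \<omega> \<partial>M) = 0"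
    and eps_sq_int: "integrable M (\<lambda>\<omega>. (eps 0 \<omega>)\<^sup>2)"
    and sigma_pos: "\<sigma> > 0"
    and eps_var: "(\<integral>\<omega>. (eps 0 \<omega>)\<^sup>2 \<partial>M) = \<sigma>\<^sup>2"
    and rank: "\<And>n. n \<ge> CARD('p) \<Longrightarrow> full_col_rank X n"
    and C_lim: "(\<lambda>n. (1 / real n) *\<^sub>R gram X n) \<longlonglongrightarrow> C"
    and C_pd: "pos_def_mat C"
    and asy_normal: "conv_distr_to_density M
        (\<lambda>n \<omega>. sqrt (real n) *\<^sub>R (matrix_inv (gram X n) *v (\<Sum>i<n. eps i \<omega> *\<^sub>R X n i)))
        (gauss_density (\<sigma>\<^sup>2 *\<^sub>R matrix_inv C))"
    and LS_nonzero: "\<And>n \<beta> j. n \<ge> CARD('p) \<Longrightarrow>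
        measure M {\<omega> \<in> space M. beta_LS X eps n \<beta> \<omega> $ j = 0} = 0"
    and lam_nonneg: "\<And>n j. lam n j \<ge> 0"
    and lam_pos_or_zero: "\<And>j. (\<forall>\<^sub>F n in sequentially. lam n j > 0) \<or>
                               (\<forall>\<^sub>F n in sequentially. lam n j = 0)"
    and lamstar_n: "(\<lambda>n. lamstar lam n / real n) \<longlonglongrightarrow> 0"
    and lamstar_inf: "filterlim (lamstar lam) at_top sequentially"
    and lam0_lim: "\<And>j. (\<lambda>n. lam n j / lamstar lam n) \<longlonglongrightarrow> lam0 j"
    and lam0_range: "\<And>j. lam0 j \<in> {0..1}"
    and psi_lim: "\<And>j. (\<lambda>n. psi_ratio lam n j) \<longlonglongrightarrow> \<psi> j"
    and psi_range: "\<And>j. \<psi> j = 0 \<or> \<psi> j = \<infinity>"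
    and Cset_closed: "closed Cset"
    and Cset_proper: "Cset \<subset> Mset C lam0 \<psi>"
  shows "(\<lambda>n. INF \<beta>. measure M {\<omega> \<in> space M.
            \<beta> \<in> (\<lambda>s. beta_AL X eps lam n \<beta> \<omega> - sqrt (lamstar lam n / real n) *\<^sub>R s) ` Cset})
         \<longlonglongrightarrow> 0"
proof -
  obtain m where m: "m \<in> Mset C lam0 \<psi>" "m \<notin> Cset" using Cset_proper by blast
  interpret adaptive_lasso_limit_point M eps \<sigma> X C lam lam0 \<psi> m
    by (intro adaptive_lasso_limit_point.intro adaptive_lasso_limit_point_axioms.intro
        iid_errors.intro iid_errors_axioms.intro M m(1)) (fact assms)+
  obtain \<delta> where "\<delta> > 0" and far: "\<And>s. s \<in> Cset \<Longrightarrow> \<delta> \<le> norm (s - m)"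
    using separate_point_closed[OF Cset_closed m(2)] by (auto simp: dist_norm norm_minus_commute)
  show ?thesis
  proof (rule tendstoI)
    fix r :: real
    assume "r > 0"
    have "\<forall>\<^sub>F n in sequentially. \<exists>\<beta>. measure M {\<omega> \<in> space M.
        \<beta> \<in> (\<lambda>s. beta_AL X eps lam n \<beta> \<omega> - scale n *\<^sub>R s) ` Cset} < r"
      by (rule eventually_coverage_small[OF \<open>r > 0\<close> \<open>\<delta> > 0\<close>]) (fact far)
    then show "\<forall>\<^sub>F n in sequentially. dist (INF \<beta>. measure M {\<omega> \<in> space M.
        \<beta> \<in> (\<lambda>s. beta_AL X eps lam n \<beta> \<omega> - sqrt (lamstar lam n / real n) *\<^sub>R s) ` Cset}) 0 < r"
    proof eventually_elim
      case (elim n)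
      define P where "P \<beta> = measure M {\<omega> \<in> space M.
        \<beta> \<in> (\<lambda>s. beta_AL X eps lam n \<beta> \<omega> - sqrt (lamstar lam n / real n) *\<^sub>R s) ` Cset}" for \<beta>
      obtain \<beta> where "P \<beta> < r" using elim by (auto simp: P_def scale_def)
      moreover have "(INF \<beta>. P \<beta>) \<le> P \<beta>" by (rule cINF_lower) (auto intro: bdd_belowI[of _ 0] simp: P_def)
      moreover have "(INF \<beta>. P \<beta>) \<ge> 0" by (rule cINF_greatest) (auto simp: P_def)
      ultimately show ?case by (simp add: P_def[symmetric])
    qed
  qed
qed

end
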